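(* Let $n\ge2$ and $\Delta\subset B_n$ a proper ideal. Then for $0\le i\le n-1$, $$h_i(\mathrm{Bier}(B_n,\Delta))=\#\{(A;x) \text{ facet of } \mathrm{Bier}(B_n,\Delta) : |A\cap(x,n]|+|[1,x)\setminus A|=i\}.$$ Equivalently (reversing the order of the ground set), $h_i(\mathrm{Bier}(B_n,\Delta))=\#\{(A;x): |A\cap[1,x)|+|(x,n]\setminus A|=i\}$.
   Context: $B_n$ is the Boolean lattice of subsets of $[1,n]=\{1,\dots,n\}$; $(x,n]=\{x+1,\dots,n\}$, $[1,x)=\{1,\dots,x-1\}$. A proper ideal $\Delta\subset B_n$ is a nonempty family of subsets of $[1,n]$ closed under taking subsets with $[1,n]\notin\Delta$. The Bier sphere $\mathrm{Bier}(B_n,\Delta)$ is the simplicial complex whose faces are the pairs $(B,C)$ with $B\subsetneq C\subseteq[1,n]$, $B\in\Delta$, $C\notin\Delta$, with $(B',C')$ a face of $(B,C)$ iff $B'\subseteq B$ and $C\subseteq C'$; the face $(B,C)$ has $|B|+n-|C|$ vertices (the empty face is $(\emptyset,[1,n])$). Its facets are $(A;x):=(A,A\cup\{x\})$ with $A\in\Delta$, $x\notin A$, $A\cup\{x\}\notin\Delta$, each with $n-1$ vertices. For a simplicial complex $\Gamma$ all of whose facets have $n-1$ vertices, $f_j(\Gamma)$ is the number of faces with $j$ vertices ($f_0=1$) and $h_i(\Gamma):=\sum_{j=0}^{n-1}(-1)^{i+j}\binom{n-1-j}{n-1-i}f_j(\Gamma)$ for $0\le i\le n-1$, $h_i:=0$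 otherwise. *)

theory Defs
  imports Main
begin

definition proper_ideal :: "nat \<Rightarrow> nat set set \<Rightarrow> bool" where
  "proper_ideal n \<Delta> \<longleftrightarrow>
     \<Delta> \<noteq> {} \<and> (\<forall>A\<in>\<Delta>. A \<subseteq> {1..n}) \<and>
     (\<forall>A\<in>\<Delta>. \<forall>B. B \<subseteq> A \<longrightarrow> B \<in> \<Delta>) \<and> {1..n} \<notin> \<Delta>"

definition bier_faces :: "nat \<Rightarrow> nat set set \<Rightarrow> (nat set \<times> nat set) set" where
  "bier_faces n \<Delta> = {(B, C). B \<subset> C \<and> C \<subseteq> {1..n} \<and> B \<in> \<Delta> \<and> C \<notin> \<Delta>}"

definition face_size :: "nat \<Rightarrow> nat set \<times> nat set \<Rightarrow> nat" where
  "face_size n F = card (fst F) + (n - card (snd F))"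

definition bier_f :: "nat \<Rightarrow> nat set set \<Rightarrow> nat \<Rightarrow> nat" where
  "bier_f n \<Delta> j = card {F \<in> bier_faces n \<Delta>. face_size n F = j}"

definition bier_h :: "nat \<Rightarrow> nat set set \<Rightarrow> nat \<Rightarrow> int" where
  "bier_h n \<Delta> i = (if i \<le> n - 1 then
     (\<Sum>j = 0..n - 1. (-1) ^ (i + j) * int ((n - 1 - j) choose (n - 1 - i)) * int (bier_f n \<Delta> j))
   else 0)"

text \<open>Facets (A;x) = (A, A \<union> {x}), represented as the pair (A, x).\<close>
definition bier_facets :: "nat \<Rightarrow> nat set set \<Rightarrow> (nat set \<times> nat) set" where
  "bier_facets n \<Delta> = {(A, x). A \<in> \<Delta> \<and> x \<in> {1..n} \<and> x \<notin> A \<and> insert x A \<notin> \<Delta>}"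

end

theory Submission
  imports Defs
begin

(*
  Every face (B, C) of Bier(B_n, Delta) lies in the interval below exactly one facet (A; x):
  x is the least point with B \<union> (C \<inter> [1, x]) \<notin> Delta, and A = B \<union> (C \<inter> [1, x)).
  The faces assigned to (A; x) form the Boolean interval between the facet and the face
  (A \<inter> (x, n], A \<union> [x, n]), which has r = |A \<inter> (x, n]| + |[1, x) - A| vertices.
  So the complex is partitionable, f_j is the sum over facets of C(n - 1 - r, j - r), and
  inverting this binomial transform gives that h_i counts the facets with r = i.
*)

definition h_transform :: "nat \<Rightarrow> (nat \<Rightarrow> int) \<Rightarrow> nat \<Rightarrow> int" where
  "h_transform m f i = (\<Sum>j=0..m. (-1) ^ (i + j) * int ((m - j) choose (m - i)) * f j)"

lemma h_transform_sum:
  "h_transform m (\<lambda>j. \<Sum>F\<in>I. f F j) i = (\<Sum>F\<in>I. h_transform m (f F) i)"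
  unfolding h_transform_def by (simp add: sum_distrib_left sum.swap[of _ I])

lemma alternating_sum_choose_shifted:
  fixes r i :: nat
  assumes "r \<le> i"
  shows "(\<Sum>j=r..i. (-1::int) ^ (i + j) * int ((i - r) choose (j - r))) = (if i = r then 1 else 0)"
proof -
  define s where "s = i - r"
  have "(\<Sum>j=r..i. (-1::int) ^ (i + j) * int ((i - r) choose (j - r)))
      = (\<Sum>t\<le>s. (-1) ^ (s + t + 2 * r) * int (s choose t))"
    using assms by (simp add: sum.atLeastAtMost_shift_0 atLeast0AtMost s_def algebra_simps)
  also have "\<dots> = (-1) ^ s * (\<Sum>t\<le>s. (-1) ^ t * int (s choose t))"
    by (simp add: power_add power_mult sum_distrib_left mult.assoc)
  also have "\<dots> = (if i = r then 1 else 0)"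
    using choose_alternating_sum[of s] assms by (auto simp: s_def)
  finally show ?thesis .
qed

lemma h_transform_Boolean_interval:
  fixes m r i :: nat
  assumes "i \<le> m"
  shows "h_transform m (\<lambda>j. if r \<le> j then int ((m - r) choose (j - r)) else 0) i
       = (if i = r then 1 else 0)"
proof -
  let ?f = "\<lambda>j. if r \<le> j then int ((m - r) choose (j - r)) else 0"
  let ?t = "\<lambda>j. (-1::int) ^ (i + j) * int ((m - j) choose (m - i)) * ?f j"
  have "?t j = 0" if "j \<le> m" "j \<notin> {r..i}" for j
    using that assms by auto
  then have "h_transform m ?f i = (\<Sum>j=r..i. ?t j)"
    unfolding h_transform_def by (intro sum.mono_neutral_right) (use assms in auto)
  also have "\<dots> = int ((m - r) choose (i - r))
      * (\<Sum>j=r..i. (-1) ^ (i + j) * int ((i - r) choose (j - r)))"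
    unfolding sum_distrib_left
  proof (rule sum.cong[OF refl])
    fix j assume j: "j \<in> {r..i}"
    have "((m - r) choose (i - r)) * ((i - r) choose (j - r))
        = ((m - r) choose (j - r)) * ((m - j) choose (i - j))"
      using choose_mult[of "j - r" "i - r" "m - r"] j assms by (auto simp: diff_diff_eq2)
    moreover have "(m - j) choose (m - i) = (m - j) choose (i - j)"
      using binomial_symmetric[of "i - j" "m - j"] j assms by simp
    ultimately show
      "?t j = int ((m - r) choose (i - r)) * ((-1) ^ (i + j) * int ((i - r) choose (j - r)))"
      using j by (simp add: algebra_simps flip: of_nat_mult)
  qed
  also have "\<dots> = (if i = r then 1 else 0)"
    using alternating_sum_choose_shifted[of r i] by (cases "r \<le> i") auto
  finally show ?thesis .
qed

lemma h_transform_Boolean_partition: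
  assumes "finite I" "i \<le> m"
  shows "h_transform m (\<lambda>j. \<Sum>F\<in>I. if r F \<le> j then int ((m - r F) choose (j - r F)) else 0) i
       = int (card {F \<in> I. r F = i})"
proof -
  have "h_transform m (\<lambda>j. \<Sum>F\<in>I. if r F \<le> j then int ((m - r F) choose (j - r F)) else 0) i
      = (\<Sum>F\<in>I. if r F = i then 1 else 0)"
    by (simp only: h_transform_sum h_transform_Boolean_interval[OF assms(2)] eq_commute)
  also have "\<dots> = int (card {F \<in> I. r F = i})"
    by (simp add: sum.inter_filter[OF assms(1), symmetric])
  finally show ?thesis .
qed

definition face_interval :: "'a set \<times> 'a set \<Rightarrow> 'a set \<times> 'a set \<Rightarrow> ('a set \<times> 'a set) set" where
  "face_interval L U = {(B, C). fst L \<subseteq> B \<and> B \<subseteq> fst U \<and> snd U \<subseteq> C \<and> C \<subseteq> snd L}"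

lemma bij_betw_face_interval_Pow:
  assumes "B0 \<subseteq> B1" "B1 \<subseteq> C1" "C1 \<subseteq> C0"
  shows "bij_betw (\<lambda>(B, C). (B - B0) \<union> (C0 - C))
           (face_interval (B0, C0) (B1, C1)) (Pow ((B1 - B0) \<union> (C0 - C1)))"
  by (rule bij_betw_byWitness[where f' = "\<lambda>S. (B0 \<union> (S \<inter> C1), C0 - (S - C1))"])
    (use assms in \<open>auto simp: face_interval_def\<close>)

lemma face_size_in_face_interval:
  assumes "(B, C) \<in> face_interval (B0, C0) (B1, C1)" "B1 \<subseteq> C1" "C0 \<subseteq> {1..n}"
  shows "face_size n (B, C) = face_size n (B0, C0) + card ((B - B0) \<union> (C0 - C))"
proof -
  have "B0 \<subseteq> B" "B \<subseteq> B1" "C1 \<subseteq> C" "C \<subseteq> C0"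
    using assms(1) by (auto simp: face_interval_def)
  with assms(2) have sub: "B0 \<subseteq> B" "B \<subseteq> C" "C \<subseteq> C0" by auto
  have fin: "finite C0" and "card C0 \<le> n"
    using finite_subset[OF assms(3)] card_mono[OF _ assms(3)] by auto
  have "card B = card B0 + card (B - B0)"
    using sub fin by (metis card_Diff_subset card_mono finite_subset le_add_diff_inverse)
  moreover have "card C + card (C0 - C) = card C0"
    using sub fin by (metis card_Diff_subset card_mono finite_subset le_add_diff_inverse)
  moreover have "card ((B - B0) \<union> (C0 - C)) = card (B - B0) + card (C0 - C)"
    using sub fin by (intro card_Un_disjoint) (auto intro: finite_subset)
  ultimately show ?thesis
    using \<open>card C0 \<le> n\<close> by (simp add: face_size_def)
qed

lemma card_face_interval_of_size:
  assumes "B0 \<subseteq> B1" "B1 \<subseteq> C1" "C1 \<subseteq> C0" "C0 \<subseteq> {1..n}"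
  defines "r \<equiv> face_size n (B0, C0)"
  shows "card {G \<in> face_interval (B0, C0) (B1, C1). face_size n G = j}
       = (if r \<le> j then (face_size n (B1, C1) - r) choose (j - r) else 0)"
proof -
  let ?I = "face_interval (B0, C0) (B1, C1)" and ?D = "(B1 - B0) \<union> (C0 - C1)"
  let ?\<phi> = "\<lambda>(B, C). (B - B0) \<union> (C0 - C)"
  have size: "face_size n G = r + card (?\<phi> G)" if "G \<in> ?I" for G
  proof (cases G)
    case (Pair B C)
    then show ?thesis
      using that face_size_in_face_interval[of B C B0 C0 B1 C1 n] assms(2,3,4) by (simp add: r_def)
  qed
  have "(B1, C1) \<in> ?I"
    using assms(1-3) by (simp add: face_interval_def)
  then have top: "face_size n (B1, C1) = r + card ?D"
    using size by simp
  have "bij_betw ?\<phi> {G \<in> ?I. face_size n G = j} {S \<in> Pow ?D. r + card S = j}"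
    using bij_betw_face_interval_Pow[OF assms(1-3)] by (rule bij_betw_Collect) (simp add: size)
  then have "card {G \<in> ?I. face_size n G = j} = card {S. S \<subseteq> ?D \<and> r + card S = j}"
    by (simp add: bij_betw_same_card)
  also have "\<dots> = (if r \<le> j then card ?D choose (j - r) else 0)"
  proof (cases "r \<le> j")
    case True
    then have "{S. S \<subseteq> ?D \<and> r + card S = j} = {S. S \<subseteq> ?D \<and> card S = j - r}"
      by auto
    moreover have "finite ?D"
      using assms(2-4) by (intro finite_subset[of ?D "{1..n}"]) auto
    ultimately show ?thesis
      using True n_subsets[of ?D "j - r"] by simp
  qed simp
  finally show ?thesis
    using top by simp
qed

definition restriction_face :: "nat \<Rightarrow> nat set \<Rightarrow> nat \<Rightarrow> nat set \<times> nat set" where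
  "restriction_face n A x = (A \<inter> {x<..n}, A \<union> {x..n})"

definition facet_interval :: "nat \<Rightarrow> nat set \<Rightarrow> nat \<Rightarrow> (nat set \<times> nat set) set" where
  "facet_interval n A x = face_interval (restriction_face n A x) (A, insert x A)"

lemma face_size_restriction_face:
  assumes "A \<subseteq> {1..n}" "x \<in> {1..n}"
  shows "face_size n (restriction_face n A x) = card (A \<inter> {x<..n}) + card ({1..<x} - A)"
proof -
  have "{1..n} - (A \<union> {x..n}) = {1..<x} - A"
    using assms by auto
  moreover have "A \<union> {x..n} \<subseteq> {1..n}"
    using assms by auto
  ultimately have "n - card (A \<union> {x..n}) = card ({1..<x} - A)"
    by (metis card_Diff_subset card_atLeastAtMost diff_Suc_1 finite_subset finite_atLeastAtMost)
  then show ?thesis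
    by (simp add: face_size_def restriction_face_def)
qed

lemma card_facet_interval_of_size:
  assumes "A \<subseteq> {1..n}" "x \<in> {1..n}" "x \<notin> A"
  defines "r \<equiv> face_size n (restriction_face n A x)"
  shows "card {G \<in> facet_interval n A x. face_size n G = j}
       = (if r \<le> j then (n - 1 - r) choose (j - r) else 0)"
proof -
  have "finite A"
    using assms(1) finite_subset by blast
  moreover have "card (insert x A) \<le> n"
    using assms(1,2) card_mono[of "{1..n}" "insert x A"] by simp
  ultimately have top: "face_size n (A, insert x A) = n - 1"
    using assms(3) by (simp add: face_size_def)
  have "A \<inter> {x<..n} \<subseteq> A" "A \<subseteq> insert x A" "insert x A \<subseteq> A \<union> {x..n}"
    "A \<union> {x..n} \<subseteq> {1..n}"
    using assms(1,2) by auto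
  from card_face_interval_of_size[OF this, of j] show ?thesis
    using top by (simp add: facet_interval_def restriction_face_def r_def)
qed

lemma bier_facetD:
  assumes "proper_ideal n \<Delta>" "(A, x) \<in> bier_facets n \<Delta>"
  shows "A \<in> \<Delta>" "insert x A \<notin> \<Delta>" "A \<subseteq> {1..n}" "x \<in> {1..n}" "x \<notin> A"
  using assms by (auto simp: bier_facets_def proper_ideal_def)

lemma finite_bier_faces: "finite (bier_faces n \<Delta>)"
  by (rule finite_subset[of _ "Pow {1..n} \<times> Pow {1..n}"]) (auto simp: bier_faces_def)

lemma finite_bier_facets:
  assumes "proper_ideal n \<Delta>"
  shows "finite (bier_facets n \<Delta>)"
  by (rule finite_subset[of _ "Pow {1..n} \<times> {1..n}"])
    (use assms in \<open>auto simp: bier_facets_def proper_ideal_def\<close>)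

lemma facet_interval_subset_bier_faces:
  assumes "proper_ideal n \<Delta>" "(A, x) \<in> bier_facets n \<Delta>"
  shows "facet_interval n A x \<subseteq> bier_faces n \<Delta>"
proof
  fix G assume "G \<in> facet_interval n A x"
  then obtain B C where G: "G = (B, C)" "B \<subseteq> A" "insert x A \<subseteq> C" "C \<subseteq> A \<union> {x..n}"
    by (auto simp: facet_interval_def face_interval_def restriction_face_def)
  have "B \<in> \<Delta>" "C \<notin> \<Delta>"
    using G(2,3) assms bier_facetD[OF assms] by (auto simp: proper_ideal_def)
  with G bier_facetD[OF assms] show "G \<in> bier_faces n \<Delta>"
    by (auto simp: bier_faces_def)
qed

definition assigned_facet :: "nat set set \<Rightarrow> nat set \<times> nat set \<Rightarrow> nat set \<times> nat" where
  "assigned_facet \<Delta> =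
     (\<lambda>(B, C). let x = LEAST y. B \<union> (C \<inter> {..y}) \<notin> \<Delta> in (B \<union> (C \<inter> {..<x}), x))"

lemma assigned_facet_eqI:
  assumes "proper_ideal n \<Delta>" "(A, x) \<in> bier_facets n \<Delta>" "(B, C) \<in> facet_interval n A x"
  shows "assigned_facet \<Delta> (B, C) = (A, x)"
proof -
  note facet = bier_facetD[OF assms(1,2)]
  have BC: "A \<inter> {x<..n} \<subseteq> B" "B \<subseteq> A" "insert x A \<subseteq> C" "C \<subseteq> A \<union> {x..n}"
    using assms(3) by (auto simp: facet_interval_def face_interval_def restriction_face_def)
  have "A \<inter> {x<..} \<subseteq> B"
    using BC(1) facet(3) by (auto simp: subset_iff)
  have below: "B \<union> (C \<inter> {..y}) \<subseteq> A" if "y < x" for y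
    using BC that by auto
  have "B \<union> (C \<inter> {..x}) = insert x A"
    using BC \<open>A \<inter> {x<..} \<subseteq> B\<close> by (auto simp: not_le)
  then have "(LEAST y. B \<union> (C \<inter> {..y}) \<notin> \<Delta>) = x"
    using below facet(1,2) assms(1) unfolding proper_ideal_def
    by (intro Least_equality) (auto simp: not_le)
  moreover have "B \<union> (C \<inter> {..<x}) = A"
  proof
    have "A = (A \<inter> {..<x}) \<union> (A \<inter> {x<..})"
      using facet(5) by (auto simp: less_le)
    then show "A \<subseteq> B \<union> (C \<inter> {..<x})"
      using BC(3) \<open>A \<inter> {x<..} \<subseteq> B\<close> by blast
  qed (use BC in auto)
  ultimately show ?thesis
    by (simp add: assigned_facet_def)
qed

lemma assigned_facet_of_face:
  assumes "proper_ideal n \<Delta>" "(B, C) \<in> bier_faces n \<Delta>"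
  obtains A x where "assigned_facet \<Delta> (B, C) = (A, x)" "(A, x) \<in> bier_facets n \<Delta>"
    "(B, C) \<in> facet_interval n A x"
proof -
  have face: "B \<subset> C" "C \<subseteq> {1..n}" "B \<in> \<Delta>" "C \<notin> \<Delta>"
    using assms(2) by (auto simp: bier_faces_def)
  define x where "x = (LEAST y. B \<union> (C \<inter> {..y}) \<notin> \<Delta>)"
  define A where "A = B \<union> (C \<inter> {..<x})"
  have "B \<union> (C \<inter> {..n}) = C"
    using face(1,2) by auto
  then have "B \<union> (C \<inter> {..n}) \<notin> \<Delta>"
    using face(4) by simp
  then have exit: "B \<union> (C \<inter> {..x}) \<notin> \<Delta>" and "x \<le> n"
    unfolding x_def by (rule LeastI, rule Least_le)
  have "C \<inter> {..0} = {}"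
    using face(2) by auto
  then have "x \<noteq> 0"
    using exit face(3) by (metis Un_empty_right)
  then have "A = B \<union> (C \<inter> {..x - 1})"
    by (auto simp: A_def)
  moreover have "B \<union> (C \<inter> {..x - 1}) \<in> \<Delta>"
    using not_less_Least[where P = "\<lambda>y. B \<union> (C \<inter> {..y}) \<notin> \<Delta>" and k = "x - 1"] \<open>x \<noteq> 0\<close>
    unfolding x_def by simp
  ultimately have "A \<in> \<Delta>"
    by simp
  have "B \<union> (C \<inter> {..x}) = A" if "x \<notin> C \<or> x \<in> B"
    using that by (auto simp: A_def le_less)
  then have "x \<in> C" "x \<notin> B"
    using exit \<open>A \<in> \<Delta>\<close> by auto
  moreover have "insert x A = B \<union> (C \<inter> {..x})"
    using \<open>x \<in> C\<close> by (auto simp: A_def le_less)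
  ultimately have "(A, x) \<in> bier_facets n \<Delta>"
    using exit \<open>A \<in> \<Delta>\<close> \<open>x \<noteq> 0\<close> \<open>x \<le> n\<close> by (auto simp: bier_facets_def A_def)
  moreover have "(B, C) \<in> facet_interval n A x"
    using face \<open>x \<in> C\<close>
    by (auto simp: facet_interval_def face_interval_def restriction_face_def A_def)
  moreover have "assigned_facet \<Delta> (B, C) = (A, x)"
    by (simp add: assigned_facet_def x_def A_def Let_def)
  ultimately show ?thesis
    using that by blast
qed

lemma facet_interval_eq_fibre:
  assumes "proper_ideal n \<Delta>" "(A, x) \<in> bier_facets n \<Delta>"
  shows "facet_interval n A x = {G \<in> bier_faces n \<Delta>. assigned_facet \<Delta> G = (A, x)}"
proof (intro equalityI subsetI)
  fix G assume "G \<in> facet_interval n A x"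
  then show "G \<in> {G \<in> bier_faces n \<Delta>. assigned_facet \<Delta> G = (A, x)}"
    using facet_interval_subset_bier_faces[OF assms] assigned_facet_eqI[OF assms] by (cases G) auto
next
  fix G assume "G \<in> {G \<in> bier_faces n \<Delta>. assigned_facet \<Delta> G = (A, x)}"
  then obtain B C where G: "G = (B, C)" "(B, C) \<in> bier_faces n \<Delta>" "assigned_facet \<Delta> (B, C) = (A, x)"
    by (cases G) auto
  obtain A' x' where "assigned_facet \<Delta> (B, C) = (A', x')" "(B, C) \<in> facet_interval n A' x'"
    using assigned_facet_of_face[OF assms(1) G(2)] by blast
  with G show "G \<in> facet_interval n A x"
    by simp
qed

lemma bier_f_eq_sum_over_facets:
  assumes "proper_ideal n \<Delta>"
  defines "r \<equiv> \<lambda>F. face_size n (restriction_face n (fst F) (snd F))"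
  shows "bier_f n \<Delta> j = (\<Sum>F\<in>bier_facets n \<Delta>. if r F \<le> j then (n - 1 - r F) choose (j - r F) else 0)"
proof -
  let ?S = "{G \<in> bier_faces n \<Delta>. face_size n G = j}"
  have "assigned_facet \<Delta> (B, C) \<in> bier_facets n \<Delta>" if "(B, C) \<in> bier_faces n \<Delta>" for B C
    using assigned_facet_of_face[OF assms(1) that] by metis
  then have "assigned_facet \<Delta> ` ?S \<subseteq> bier_facets n \<Delta>"
    by auto
  then have "bier_f n \<Delta> j = (\<Sum>F\<in>bier_facets n \<Delta>. card {G \<in> ?S. assigned_facet \<Delta> G = F})"
    using sum.group[of ?S "bier_facets n \<Delta>" "assigned_facet \<Delta>" "\<lambda>_. 1::nat"]
      finite_bier_faces finite_bier_facets[OF assms(1)] by (simp add: bier_f_def flip: card_eq_sum)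
  also have "\<dots> = (\<Sum>F\<in>bier_facets n \<Delta>. if r F \<le> j then (n - 1 - r F) choose (j - r F) else 0)"
  proof (rule sum.cong[OF refl], clarify)
    fix A x assume facet: "(A, x) \<in> bier_facets n \<Delta>"
    then have "{G \<in> ?S. assigned_facet \<Delta> G = (A, x)} = {G \<in> facet_interval n A x. face_size n G = j}"
      by (auto simp: facet_interval_eq_fibre[OF assms(1)])
    then show "card {G \<in> ?S. assigned_facet \<Delta> G = (A, x)}
        = (if r (A, x) \<le> j then (n - 1 - r (A, x)) choose (j - r (A, x)) else 0)"
      using card_facet_interval_of_size bier_facetD[OF assms(1) facet] by (simp add: r_def)
  qed
  finally show ?thesis .
qed

theorem mainTheorem9:
  fixes n :: nat and \<Delta> :: "nat set set" and i :: nat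
  assumes "n \<ge> 2" and "proper_ideal n \<Delta>" and "i \<le> n - 1"
  shows "bier_h n \<Delta> i =
    int (card {(A, x) \<in> bier_facets n \<Delta>.
                 card (A \<inter> {x<..n}) + card ({1..<x} - A) = i})"
proof -
  \<comment> \<open>The partition argument works for every \<open>n\<close>.\<close>
  let ?F = "bier_facets n \<Delta>"
  define r where "r F = face_size n (restriction_face n (fst F) (snd F))" for F
  have "bier_h n \<Delta> i = h_transform (n - 1) (\<lambda>j. int (bier_f n \<Delta> j)) i"
    using assms(3) by (simp add: bier_h_def h_transform_def)
  also have "\<dots> = int (card {F \<in> ?F. r F = i})"
    unfolding bier_f_eq_sum_over_facets[OF assms(2)] r_def[symmetric] of_nat_sum if_distrib[of int] of_nat_0
    by (rule h_transform_Boolean_partition[OF finite_bier_facets[OF assms(2)] assms(3)])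
  also have "{F \<in> ?F. r F = i} = {(A, x) \<in> ?F. card (A \<inter> {x<..n}) + card ({1..<x} - A) = i}"
  proof -
    have "r (A, x) = card (A \<inter> {x<..n}) + card ({1..<x} - A)" if "(A, x) \<in> ?F" for A x
      using face_size_restriction_face bier_facetD[OF assms(2) that] by (simp add: r_def)
    then show ?thesis
      by auto
  qed
  finally show ?thesis .
qed

end
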